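(* Let $G$ be a subgroup of the symmetric group $\mathcal{S}_{N}$ and $\chi$ an irreducible character of $G$, and define for $N\times N$ real matrices $A=(a_{ij})$ the immanant $d_{\chi}^{G}(A)=\sum_{\sigma\in G}\chi(\sigma)\prod_{i=1}^{N}a_{i\,\sigma(i)}$. If $A,B,C,X$ are $N\times N$ real symmetric positive semidefinite matrices, then \[ d_{\chi}^{G}(A+X)+d_{\chi}^{G}(B+X)+d_{\chi}^{G}(C+X)+d_{\chi}^{G}(A+B+C+X)\geq d_{\chi}^{G}(A+B+X)+d_{\chi}^{G}(B+C+X)+d_{\chi}^{G}(C+A+X)+d_{\chi}^{G}(X). \] *)

theory Defs
  imports "HOL-Algebra.Sym_Groups" "Jordan_Normal_Form.Matrix" "HOL-Library.Complex_Order"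
begin

text \<open>Real N x N matrices are functions nat => nat => real, indexed by 1..N
  (matching sym_group N, which permutes 1..N).\<close>

definition real_sym_psd :: "nat \<Rightarrow> (nat \<Rightarrow> nat \<Rightarrow> real) \<Rightarrow> bool" where
  "real_sym_psd N A \<longleftrightarrow>
     (\<forall>i\<in>{1..N}. \<forall>j\<in>{1..N}. A i j = A j i) \<and>
     (\<forall>x :: nat \<Rightarrow> real. (\<Sum>i=1..N. \<Sum>j=1..N. x i * A i j * x j) \<ge> 0)"

definition is_representation :: "(nat \<Rightarrow> nat) set \<Rightarrow> nat \<Rightarrow> ((nat \<Rightarrow> nat) \<Rightarrow> complex mat) \<Rightarrow> bool" where
  "is_representation G d \<rho> \<longleftrightarrow>
     (\<forall>\<sigma>\<in>G. \<rho> \<sigma> \<in> carrier_mat d d) \<and>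
     \<rho> id = 1\<^sub>m d \<and>
     (\<forall>\<sigma>\<in>G. \<forall>\<tau>\<in>G. \<rho> (\<sigma> \<circ> \<tau>) = \<rho> \<sigma> * \<rho> \<tau>)"

definition invariant_subspace :: "(nat \<Rightarrow> nat) set \<Rightarrow> nat \<Rightarrow> ((nat \<Rightarrow> nat) \<Rightarrow> complex mat) \<Rightarrow> complex vec set \<Rightarrow> bool" where
  "invariant_subspace G d \<rho> W \<longleftrightarrow>
     W \<subseteq> carrier_vec d \<and> 0\<^sub>v d \<in> W \<and>
     (\<forall>v\<in>W. \<forall>w\<in>W. v + w \<in> W) \<and>
     (\<forall>c::complex. \<forall>v\<in>W. c \<cdot>\<^sub>v v \<in> W) \<and>
     (\<forall>\<sigma>\<in>G. \<forall>v\<in>W. \<rho> \<sigma> *\<^sub>v v \<in> W)"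

definition irreducible_representation :: "(nat \<Rightarrow> nat) set \<Rightarrow> nat \<Rightarrow> ((nat \<Rightarrow> nat) \<Rightarrow> complex mat) \<Rightarrow> bool" where
  "irreducible_representation G d \<rho> \<longleftrightarrow>
     is_representation G d \<rho> \<and> d > 0 \<and>
     (\<forall>W. invariant_subspace G d \<rho> W \<longrightarrow> W = {0\<^sub>v d} \<or> W = carrier_vec d)"

definition mat_trace :: "complex mat \<Rightarrow> complex" where
  "mat_trace M = (\<Sum>i<dim_row M. M $$ (i, i))"

definition irreducible_character :: "(nat \<Rightarrow> nat) set \<Rightarrow> ((nat \<Rightarrow> nat) \<Rightarrow> complex) \<Rightarrow> bool" where
  "irreducible_character G \<chi> \<longleftrightarrow>
     (\<exists>d \<rho>. irreducible_representation G d \<rho> \<and> (\<forall>\<sigma>\<in>G. \<chi> \<sigma> = mat_trace (\<rho> \<sigma>)))"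

definition immanant :: "(nat \<Rightarrow> nat) set \<Rightarrow> ((nat \<Rightarrow> nat) \<Rightarrow> complex) \<Rightarrow> nat \<Rightarrow> (nat \<Rightarrow> nat \<Rightarrow> real) \<Rightarrow> complex" where
  "immanant G \<chi> N A = (\<Sum>\<sigma>\<in>G. \<chi> \<sigma> * (\<Prod>i=1..N. complex_of_real (A i (\<sigma> i))))"

end

theory Submission
  imports Defs "Jordan_Normal_Form.Determinant"
begin

text \<open>Averaging over G gives |G| d(Y) = \<Sum>s,t\<in>G \<chi>(t s\<inverse>) \<Prod>i Y(s i, t i). The kernel
  (s, t) \<mapsto> \<chi>(t s\<inverse>) is positive semidefinite, because a representation of a finite group is
  unitary for the invariant form H = \<Sum>g \<rho>(g)* \<rho>(g); and for positive semidefinite Y so is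
  (s, t) \<mapsto> Y(s i, t i), as Y is a sum of squares. The difference of the two sides of the
  inequality is the third finite difference of Y \<mapsto> \<Prod>i Y(s i, t i) in the directions A, B, C;
  expanding it writes it as a sum of products of such kernels, which is positive semidefinite
  by the Schur product theorem. Finally, the entries of a positive semidefinite kernel have
  nonnegative sum.\<close>

section \<open>Positive semidefinite forms are sums of squares\<close>

definition quad_form :: "'a set \<Rightarrow> ('a \<Rightarrow> 'a \<Rightarrow> real) \<Rightarrow> ('a \<Rightarrow> real) \<Rightarrow> real" where
  "quad_form S M x = (\<Sum>i\<in>S. \<Sum>j\<in>S. x i * M i j * x j)"

lemma nonneg_quadratic_discriminant:
  fixes m s q :: real
  assumes nonneg: "\<And>t. 0 \<le> t * t * m + 2 * t * s + q"
  shows "0 \<le> q" and "0 \<le> m" and "s * s \<le> m * q"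
proof -
  show q: "0 \<le> q" using nonneg[of 0] by simp
  have even: "0 \<le> t * t * m + q" for t
    using nonneg[of t] nonneg[of "-t"] by simp
  show m: "0 \<le> m"
  proof (rule ccontr)
    assume "\<not> 0 \<le> m"
    define t where "t = sqrt ((q + 1) / - m)"
    have "t * t = (q + 1) / - m" using q \<open>\<not> 0 \<le> m\<close> unfolding t_def by simp
    then have "t * t * m + q = -1" using \<open>\<not> 0 \<le> m\<close> by (simp add: field_simps)
    with even[of t] show False by simp
  qed
  show "s * s \<le> m * q"
  proof (cases "m = 0")
    case True
    have "s = 0"
    proof (rule ccontr)
      assume "s \<noteq> 0"
      define t where "t = - (q + 1) / (2 * s)"
      have "t * t * m + 2 * t * s + q = -1"
        using True \<open>s \<noteq> 0\<close> unfolding t_def by (simp add: field_simps)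
      with nonneg[of t] show False by simp
    qed
    with True show ?thesis by simp
  next
    case False
    have "0 \<le> (- s / m) * (- s / m) * m + 2 * (- s / m) * s + q" by (rule nonneg)
    also have "\<dots> = (m * q - s * s) / m" using False by (simp add: field_simps)
    finally show ?thesis using m False by (simp add: zero_le_divide_iff)
  qed
qed

lemma quad_form_insert_fun_upd:
  assumes fin: "finite F" and p: "p \<notin> F"
    and sym: "\<forall>i\<in>insert p F. \<forall>j\<in>insert p F. M i j = M j i"
  shows "quad_form (insert p F) M (x(p := t))
     = t * t * M p p + 2 * t * (\<Sum>j\<in>F. M p j * x j) + quad_form F M x"
proof -
  let ?y = "x(p := t)"
  have "(\<Sum>j\<in>F. ?y p * M p j * ?y j) = t * (\<Sum>j\<in>F. M p j * x j)"
    using p by (auto simp: sum_distrib_left intro!: sum.cong)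
  then have row_p: "(\<Sum>j\<in>insert p F. ?y p * M p j * ?y j) = t * t * M p p + t * (\<Sum>j\<in>F. M p j * x j)"
    using fin p by simp
  have row_i: "(\<Sum>j\<in>insert p F. ?y i * M i j * ?y j) = t * (M p i * x i) + (\<Sum>j\<in>F. x i * M i j * x j)"
    if i: "i \<in> F" for i
  proof -
    have "(\<Sum>j\<in>F. ?y i * M i j * ?y j) = (\<Sum>j\<in>F. x i * M i j * x j)"
      using p i by (auto intro!: sum.cong)
    moreover have "M i p = M p i" using sym i by blast
    ultimately show ?thesis using fin p i by (auto simp: algebra_simps)
  qed
  have "quad_form (insert p F) M ?y
      = (\<Sum>j\<in>insert p F. ?y p * M p j * ?y j) + (\<Sum>i\<in>F. \<Sum>j\<in>insert p F. ?y i * M i j * ?y j)"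
    unfolding quad_form_def using fin p by simp
  also have "(\<Sum>i\<in>F. \<Sum>j\<in>insert p F. ?y i * M i j * ?y j)
      = (\<Sum>i\<in>F. t * (M p i * x i) + (\<Sum>j\<in>F. x i * M i j * x j))"
    by (rule sum.cong[OF refl row_i])
  also have "\<dots> = t * (\<Sum>i\<in>F. M p i * x i) + quad_form F M x"
    by (simp add: quad_form_def sum.distrib sum_distrib_left)
  finally show ?thesis unfolding row_p by (simp add: algebra_simps fun_upd_def)
qed

lemma psd_split_row:
  assumes fin: "finite F" and p: "p \<notin> F"
    and sym: "\<forall>i\<in>insert p F. \<forall>j\<in>insert p F. M i j = M j i"
    and psd: "\<And>x. 0 \<le> quad_form (insert p F) M x"
  obtains v where "\<And>j. j \<in> insert p F \<Longrightarrow> M p j = v p * v j"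
    and "\<And>x. 0 \<le> quad_form F (\<lambda>i j. M i j - v i * v j) x"
proof -
  define m where "m = M p p"
  define s where "s x = (\<Sum>j\<in>F. M p j * x j)" for x
  have coeffs: "0 \<le> quad_form F M x" "0 \<le> m" "s x * s x \<le> m * quad_form F M x" for x
    using nonneg_quadratic_discriminant[of m "s x" "quad_form F M x"]
      psd[of "x(p := _)"] quad_form_insert_fun_upd[OF fin p sym]
    unfolding m_def s_def by auto
  \<comment> \<open>if m = 0 then v = 0, since x / 0 = 0\<close>
  define v where "v j = M p j / sqrt m" for j
  have row: "M p j = v p * v j" if j: "j \<in> insert p F" for j
  proof (cases "m = 0")
    case True
    have "s (M p) * s (M p) \<le> 0" using coeffs(3)[of "M p"] True by simp
    then have "s (M p) = 0" by (metis antisym mult_eq_0_iff zero_le_square)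
    then have "(\<Sum>k\<in>F. M p k * M p k) = 0" unfolding s_def .
    then have "\<forall>k\<in>F. M p k = 0" using fin by (simp add: sum_nonneg_eq_0_iff)
    then show ?thesis using j True by (auto simp: v_def m_def)
  next
    case False
    with coeffs(2) have "v p = sqrt m" by (simp add: v_def m_def[symmetric] real_div_sqrt)
    then show ?thesis using False coeffs(2) by (simp add: v_def)
  qed
  have "0 \<le> quad_form F (\<lambda>i j. M i j - v i * v j) x" for x
  proof -
    have "quad_form F (\<lambda>i j. M i j - v i * v j) x = quad_form F M x - (\<Sum>j\<in>F. v j * x j)\<^sup>2"
      by (simp add: quad_form_def power2_eq_square algebra_simps sum_subtractf
          sum_distrib_left sum_distrib_right)
    moreover have "(\<Sum>j\<in>F. v j * x j)\<^sup>2 = s x * s x / m"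
      using coeffs(2) by (simp add: v_def s_def power2_eq_square sum_divide_distrib[symmetric])
    moreover have "s x * s x / m \<le> quad_form F M x"
      using coeffs(1,3)[of x] coeffs(2) by (cases "m = 0") (simp_all add: divide_le_eq mult.commute)
    ultimately show ?thesis by simp
  qed
  with row that show ?thesis by blast
qed

lemma psd_eq_sum_outer:
  assumes "finite S" and "\<forall>i\<in>S. \<forall>j\<in>S. M i j = M j i" and "\<And>x. 0 \<le> quad_form S M x"
  shows "\<exists>us. \<forall>i\<in>S. \<forall>j\<in>S. M i j = (\<Sum>u\<leftarrow>us. u i * u j)"
  using assms
proof (induction S arbitrary: M rule: finite_induct)
  case empty
  then show ?case by simp
next
  case (insert p F)
  obtain v where row: "\<And>j. j \<in> insert p F \<Longrightarrow> M p j = v p * v j"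
    and rest: "\<And>x. 0 \<le> quad_form F (\<lambda>i j. M i j - v i * v j) x"
    using psd_split_row[OF insert.hyps insert.prems] by blast
  obtain us where us: "\<forall>i\<in>F. \<forall>j\<in>F. M i j - v i * v j = (\<Sum>u\<leftarrow>us. u i * u j)"
  proof -
    have "\<forall>i\<in>F. \<forall>j\<in>F. M i j - v i * v j = M j i - v j * v i"
      using insert.prems(1) by (simp add: mult.commute)
    then show ?thesis using insert.IH[OF _ rest] that by blast
  qed
  \<comment> \<open>the vectors in us are arbitrary at p and must be cut off there\<close>
  let ?us = "v # map (\<lambda>u. u(p := 0)) us"
  have "M i j = (\<Sum>u\<leftarrow>?us. u i * u j)" if i: "i \<in> insert p F" and j: "j \<in> insert p F" for i j
  proof (cases "i = p \<or> j = p")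
    case True
    then have "(\<Sum>u\<leftarrow>us. (u(p := 0)) i * (u(p := 0)) j) = 0"
      by (induction us) auto
    moreover have "M i j = v i * v j"
      using True row i j insert.prems(1) by (metis mult.commute)
    ultimately show ?thesis by (simp add: o_def)
  next
    case False
    then have "(\<Sum>u\<leftarrow>us. (u(p := 0)) i * (u(p := 0)) j) = (\<Sum>u\<leftarrow>us. u i * u j)"
      by (simp cong: map_cong)
    with False i j us show ?thesis by (simp add: o_def algebra_simps)
  qed
  then show ?case by blast
qed

section \<open>Gram kernels\<close>

definition gram_kernel :: "'a set \<Rightarrow> ('a \<Rightarrow> 'a \<Rightarrow> complex) \<Rightarrow> bool" where
  "gram_kernel S K \<longleftrightarrow> (\<exists>us. \<forall>s\<in>S. \<forall>t\<in>S. K s t = (\<Sum>u\<leftarrow>us. cnj (u s) * u t))"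

lemma gram_kernelI:
  "(\<And>s t. s \<in> S \<Longrightarrow> t \<in> S \<Longrightarrow> K s t = (\<Sum>u\<leftarrow>us. cnj (u s) * u t)) \<Longrightarrow> gram_kernel S K"
  unfolding gram_kernel_def by blast

lemma gram_kernelE:
  assumes "gram_kernel S K"
  obtains us where "\<And>s t. s \<in> S \<Longrightarrow> t \<in> S \<Longrightarrow> K s t = (\<Sum>u\<leftarrow>us. cnj (u s) * u t)"
  using assms that unfolding gram_kernel_def by metis

lemma gram_kernel_cong:
  "gram_kernel S K \<Longrightarrow> (\<And>s t. s \<in> S \<Longrightarrow> t \<in> S \<Longrightarrow> K s t = K' s t) \<Longrightarrow> gram_kernel S K'"
  unfolding gram_kernel_def by metis

lemma gram_kernel_rank_one: "gram_kernel S (\<lambda>s t. cnj (f s) * f t)"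
  by (rule gram_kernelI[of _ _ "[f]"]) simp

lemma gram_kernel_zero: "gram_kernel S (\<lambda>_ _. 0)"
  by (rule gram_kernelI[of _ _ "[]"]) simp

lemma gram_kernel_one: "gram_kernel S (\<lambda>_ _. 1)"
  using gram_kernel_rank_one[of S "\<lambda>_. 1"] by simp

lemma gram_kernel_add:
  assumes "gram_kernel S K" "gram_kernel S L"
  shows "gram_kernel S (\<lambda>s t. K s t + L s t)"
proof -
  obtain us where "\<And>s t. s \<in> S \<Longrightarrow> t \<in> S \<Longrightarrow> K s t = (\<Sum>u\<leftarrow>us. cnj (u s) * u t)"
    using gram_kernelE[OF assms(1)] by blast
  moreover obtain vs where "\<And>s t. s \<in> S \<Longrightarrow> t \<in> S \<Longrightarrow> L s t = (\<Sum>u\<leftarrow>vs. cnj (u s) * u t)"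
    using gram_kernelE[OF assms(2)] by blast
  ultimately show ?thesis by (intro gram_kernelI[of _ _ "us @ vs"]) simp
qed

lemma sum_list_mult_sum_list:
  fixes f g :: "_ \<Rightarrow> 'b::comm_semiring_0"
  shows "(\<Sum>u\<leftarrow>us. f u) * (\<Sum>v\<leftarrow>vs. g v) = (\<Sum>w\<leftarrow>List.product us vs. f (fst w) * g (snd w))"
  by (induction us) (simp_all add: distrib_right sum_list_const_mult o_def)

lemma gram_kernel_mult:
  assumes "gram_kernel S K" "gram_kernel S L"
  shows "gram_kernel S (\<lambda>s t. K s t * L s t)"
proof -
  obtain us where K: "\<And>s t. s \<in> S \<Longrightarrow> t \<in> S \<Longrightarrow> K s t = (\<Sum>u\<leftarrow>us. cnj (u s) * u t)"
    using gram_kernelE[OF assms(1)] by blast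
  obtain vs where L: "\<And>s t. s \<in> S \<Longrightarrow> t \<in> S \<Longrightarrow> L s t = (\<Sum>v\<leftarrow>vs. cnj (v s) * v t)"
    using gram_kernelE[OF assms(2)] by blast
  show ?thesis
  proof (rule gram_kernelI[of _ _ "map (\<lambda>(u, v) s. u s * v s) (List.product us vs)"])
    fix s t assume "s \<in> S" "t \<in> S"
    then have "K s t * L s t = (\<Sum>w\<leftarrow>List.product us vs. cnj (fst w s) * fst w t * (cnj (snd w s) * snd w t))"
      by (simp add: K L sum_list_mult_sum_list)
    then show "K s t * L s t = (\<Sum>w\<leftarrow>map (\<lambda>(u, v) s. u s * v s) (List.product us vs). cnj (w s) * w t)"
      by (simp add: o_def case_prod_unfold mult_ac)
  qed
qed

lemma gram_kernel_sum:
  assumes "finite I" "\<And>i. i \<in> I \<Longrightarrow> gram_kernel S (K i)"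
  shows "gram_kernel S (\<lambda>s t. \<Sum>i\<in>I. K i s t)"
  using assms by (induction I rule: finite_induct) (simp_all add: gram_kernel_zero gram_kernel_add)

lemma gram_kernel_prod:
  assumes "finite I" "\<And>i. i \<in> I \<Longrightarrow> gram_kernel S (K i)"
  shows "gram_kernel S (\<lambda>s t. \<Prod>i\<in>I. K i s t)"
  using assms by (induction I rule: finite_induct) (simp_all add: gram_kernel_one gram_kernel_mult)

lemma gram_kernel_comp:
  assumes "gram_kernel T K" "f ` S \<subseteq> T"
  shows "gram_kernel S (\<lambda>s t. K (f s) (f t))"
proof -
  obtain us where K: "\<And>s t. s \<in> T \<Longrightarrow> t \<in> T \<Longrightarrow> K s t = (\<Sum>u\<leftarrow>us. cnj (u s) * u t)"
    using gram_kernelE[OF assms(1)] by blast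
  show ?thesis
    using assms(2) by (intro gram_kernelI[of _ _ "map (\<lambda>u. u \<circ> f) us"]) (auto simp: K o_def image_subset_iff)
qed

lemma gram_kernel_nonneg_sum:
  assumes "finite S" "gram_kernel S K"
  shows "0 \<le> (\<Sum>s\<in>S. \<Sum>t\<in>S. K s t)"
proof -
  obtain us where K: "\<And>s t. s \<in> S \<Longrightarrow> t \<in> S \<Longrightarrow> K s t = (\<Sum>u\<leftarrow>us. cnj (u s) * u t)"
    using gram_kernelE[OF assms(2)] by blast
  have "(\<Sum>s\<in>S. \<Sum>t\<in>S. K s t) = (\<Sum>s\<in>S. \<Sum>t\<in>S. \<Sum>u\<leftarrow>us. cnj (u s) * u t)"
    by (simp add: K)
  also have "\<dots> = (\<Sum>u\<leftarrow>us. \<Sum>s\<in>S. \<Sum>t\<in>S. cnj (u s) * u t)"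
    by (induction us) (simp_all add: sum.distrib)
  also have "\<dots> = (\<Sum>u\<leftarrow>us. cnj (\<Sum>s\<in>S. u s) * (\<Sum>t\<in>S. u t))"
    by (simp add: cnj_sum sum_product)
  also have "0 \<le> \<dots>"
    by (intro sum_list_nonneg) (auto simp: less_eq_complex_def simp del: cnj_sum)
  finally show ?thesis .
qed

lemma gram_kernel_of_real_psd:
  assumes "finite S" and "\<forall>i\<in>S. \<forall>j\<in>S. M i j = M j i" and "\<And>x. 0 \<le> quad_form S M x"
  shows "gram_kernel S (\<lambda>i j. complex_of_real (M i j))"
proof -
  obtain us where "\<forall>i\<in>S. \<forall>j\<in>S. M i j = (\<Sum>u\<leftarrow>us. u i * u j)"
    using psd_eq_sum_outer[OF assms] by blast
  moreover have "complex_of_real (\<Sum>u\<leftarrow>us. u i * u j)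
      = (\<Sum>u\<leftarrow>us. cnj (complex_of_real (u i)) * complex_of_real (u j))" for i j
    by (induction us) simp_all
  ultimately show ?thesis
    by (intro gram_kernelI[of _ _ "map (\<lambda>u i. complex_of_real (u i)) us"]) (simp add: o_def)
qed

lemma prod_add_minus_prod:
  fixes b y :: "'i \<Rightarrow> 'a::comm_ring_1"
  assumes "finite J"
  shows "(\<Prod>i\<in>J. b i + y i) - (\<Prod>i\<in>J. y i) = (\<Sum>U\<in>Pow J - {{}}. (\<Prod>i\<in>U. b i) * (\<Prod>i\<in>J - U. y i))"
  using assms by (simp add: prod_add sum.remove[of "Pow J" "{}"])

lemma gram_kernel_sum_nonempty_subsets:
  assumes "finite I" "\<And>i. i \<in> I \<Longrightarrow> gram_kernel S (b i)" "\<And>J. J \<subseteq> I \<Longrightarrow> gram_kernel S (F J)"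
  shows "gram_kernel S (\<lambda>s t. \<Sum>U\<in>Pow I - {{}}. (\<Prod>i\<in>U. b i s t) * F (I - U) s t)"
  using assms by (intro gram_kernel_sum gram_kernel_mult gram_kernel_prod) (auto intro: finite_subset)

lemma gram_kernel_prod_add_minus_prod:
  assumes "finite J" "\<And>i. i \<in> J \<Longrightarrow> gram_kernel S (b i)" "\<And>i. i \<in> J \<Longrightarrow> gram_kernel S (y i)"
  shows "gram_kernel S (\<lambda>s t. (\<Prod>i\<in>J. b i s t + y i s t) - (\<Prod>i\<in>J. y i s t))"
proof -
  have "gram_kernel S (\<lambda>s t. \<Sum>U\<in>Pow J - {{}}. (\<Prod>i\<in>U. b i s t) * (\<Prod>i\<in>J - U. y i s t))"
    using assms by (intro gram_kernel_sum_nonempty_subsets gram_kernel_prod) (auto intro: finite_subset)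
  then show ?thesis using assms(1) by (simp add: prod_add_minus_prod)
qed

lemma third_difference_prod_expansion:
  fixes a b c x :: "'i \<Rightarrow> 'a::comm_ring_1"
  assumes "finite I"
  shows "(\<Sum>T\<in>Pow I - {{}}. (\<Prod>i\<in>T. c i) *
      ((\<Prod>i\<in>I - T. b i + (a i + x i)) - (\<Prod>i\<in>I - T. a i + x i)
     - ((\<Prod>i\<in>I - T. b i + x i) - (\<Prod>i\<in>I - T. x i))))
  = (\<Prod>i\<in>I. a i + x i) + (\<Prod>i\<in>I. b i + x i) + (\<Prod>i\<in>I. c i + x i)
    + (\<Prod>i\<in>I. a i + b i + c i + x i)
    - (\<Prod>i\<in>I. a i + b i + x i) - (\<Prod>i\<in>I. b i + c i + x i)
    - (\<Prod>i\<in>I. c i + a i + x i) - (\<Prod>i\<in>I. x i)"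
  using assms by (simp add: right_diff_distrib sum_subtractf prod_add_minus_prod[symmetric] add_ac)

lemma gram_kernel_third_difference_prod:
  assumes "finite I"
    and "\<And>i. i \<in> I \<Longrightarrow> gram_kernel S (a i)" "\<And>i. i \<in> I \<Longrightarrow> gram_kernel S (b i)"
    and "\<And>i. i \<in> I \<Longrightarrow> gram_kernel S (c i)" "\<And>i. i \<in> I \<Longrightarrow> gram_kernel S (x i)"
  shows "gram_kernel S (\<lambda>s t.
      (\<Prod>i\<in>I. a i s t + x i s t) + (\<Prod>i\<in>I. b i s t + x i s t) + (\<Prod>i\<in>I. c i s t + x i s t)
    + (\<Prod>i\<in>I. a i s t + b i s t + c i s t + x i s t)
    - (\<Prod>i\<in>I. a i s t + b i s t + x i s t) - (\<Prod>i\<in>I. b i s t + c i s t + x i s t)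
    - (\<Prod>i\<in>I. c i s t + a i s t + x i s t) - (\<Prod>i\<in>I. x i s t))"
proof -
  have fin: "finite J" if "J \<subseteq> I" for J using assms(1) that by (rule finite_subset[rotated])
  have second: "gram_kernel S (\<lambda>s t.
      (\<Prod>i\<in>J. b i s t + (a i s t + x i s t)) - (\<Prod>i\<in>J. a i s t + x i s t)
    - ((\<Prod>i\<in>J. b i s t + x i s t) - (\<Prod>i\<in>J. x i s t)))" if J: "J \<subseteq> I" for J
  proof -
    have "gram_kernel S (\<lambda>s t. \<Sum>U\<in>Pow J - {{}}. (\<Prod>i\<in>U. b i s t) *
        ((\<Prod>i\<in>J - U. a i s t + x i s t) - (\<Prod>i\<in>J - U. x i s t)))"
      using J fin assms(2-5)
      by (intro gram_kernel_sum_nonempty_subsets gram_kernel_prod_add_minus_prod) (auto intro: fin)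
    then show ?thesis
      using fin[OF J] by (simp add: right_diff_distrib sum_subtractf prod_add_minus_prod[symmetric])
  qed
  have "gram_kernel S (\<lambda>s t. \<Sum>T\<in>Pow I - {{}}. (\<Prod>i\<in>T. c i s t) *
      ((\<Prod>i\<in>I - T. b i s t + (a i s t + x i s t)) - (\<Prod>i\<in>I - T. a i s t + x i s t)
     - ((\<Prod>i\<in>I - T. b i s t + x i s t) - (\<Prod>i\<in>I - T. x i s t))))"
    using assms second by (intro gram_kernel_sum_nonempty_subsets) auto
  then show ?thesis
    using assms(1) by (elim gram_kernel_cong) (simp add: third_difference_prod_expansion)
qed

section \<open>Complex matrices as functions\<close>

text \<open>A complex d \<times> d matrix is a function on indices vanishing outside {..<d} \<times> {..<d}
  (predicate msupp); sums of matrices over a group are then plain sums.\<close>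

type_synonym cmat = "nat \<Rightarrow> nat \<Rightarrow> complex"

definition mmult :: "nat \<Rightarrow> cmat \<Rightarrow> cmat \<Rightarrow> cmat" where
  "mmult d X Y = (\<lambda>i j. \<Sum>k<d. X i k * Y k j)"

definition madj :: "cmat \<Rightarrow> cmat" where
  "madj X = (\<lambda>i j. cnj (X j i))"

definition mone :: "nat \<Rightarrow> cmat" where
  "mone d = (\<lambda>i j. if i = j \<and> i < d then 1 else 0)"

definition mtrace :: "nat \<Rightarrow> cmat \<Rightarrow> complex" where
  "mtrace d X = (\<Sum>i<d. X i i)"

definition msupp :: "nat \<Rightarrow> cmat \<Rightarrow> bool" where
  "msupp d X \<longleftrightarrow> (\<forall>i j. \<not> (i < d \<and> j < d) \<longrightarrow> X i j = 0)"

lemma mmult_assoc: "mmult d (mmult d X Y) Z = mmult d X (mmult d Y Z)"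
proof -
  have "(\<Sum>k<d. (\<Sum>l<d. X i l * Y l k) * Z k j) = (\<Sum>l<d. X i l * (\<Sum>k<d. Y l k * Z k j))" for i j
    by (simp add: sum_distrib_left sum_distrib_right mult.assoc) (rule sum.swap)
  then show ?thesis unfolding mmult_def by auto
qed

lemma madj_madj [simp]: "madj (madj X) = X"
  unfolding madj_def by simp

lemma madj_mmult: "madj (mmult d X Y) = mmult d (madj Y) (madj X)"
  unfolding madj_def mmult_def by (auto simp: mult.commute)

lemma madj_sum: "madj (\<lambda>i j. \<Sum>g\<in>G. F g i j) = (\<lambda>i j. \<Sum>g\<in>G. madj (F g) i j)"
  unfolding madj_def by simp

lemma madj_mone [simp]: "madj (mone d) = mone d"
  unfolding madj_def mone_def by (intro ext) auto

lemma msupp_mmult: "msupp d X \<Longrightarrow> msupp d Y \<Longrightarrow> msupp d (mmult d X Y)"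
  unfolding msupp_def mmult_def by auto

lemma msupp_madj: "msupp d X \<Longrightarrow> msupp d (madj X)"
  unfolding msupp_def madj_def by auto

lemma mmult_mone_left:
  assumes "msupp d X"
  shows "mmult d (mone d) X = X"
proof (intro ext)
  fix i j
  have "mmult d (mone d) X i j = (\<Sum>k<d. if k = i then (if i < d then X k j else 0) else 0)"
    unfolding mmult_def mone_def by (intro sum.cong) auto
  also have "\<dots> = X i j" using assms unfolding msupp_def by (simp add: sum.delta)
  finally show "mmult d (mone d) X i j = X i j" .
qed

lemma mmult_mone_right:
  assumes "msupp d X"
  shows "mmult d X (mone d) = X"
proof (intro ext)
  fix i j
  have "mmult d X (mone d) i j = (\<Sum>k<d. if k = j then (if j < d then X i k else 0) else 0)"
    unfolding mmult_def mone_def by (intro sum.cong) auto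
  also have "\<dots> = X i j" using assms unfolding msupp_def by (simp add: sum.delta)
  finally show "mmult d X (mone d) i j = X i j" .
qed

lemma mmult_sum_left: "mmult d (\<lambda>i j. \<Sum>g\<in>G. F g i j) X = (\<lambda>i j. \<Sum>g\<in>G. mmult d (F g) X i j)"
  unfolding mmult_def by (auto simp: sum_distrib_right intro!: ext sum.swap)

lemma mmult_sum_right: "mmult d X (\<lambda>i j. \<Sum>g\<in>G. F g i j) = (\<lambda>i j. \<Sum>g\<in>G. mmult d X (F g) i j)"
  unfolding mmult_def by (auto simp: sum_distrib_left intro!: ext sum.swap)

lemma mtrace_mmult_commute: "mtrace d (mmult d X Y) = mtrace d (mmult d Y X)"
  unfolding mtrace_def mmult_def by (subst sum.swap) (simp add: mult.commute)

lemma mtrace_sum: "mtrace d (\<lambda>i j. \<Sum>g\<in>G. F g i j) = (\<Sum>g\<in>G. mtrace d (F g))"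
  unfolding mtrace_def by (rule sum.swap)

lemma mtrace_mmult_madj: "mtrace d (mmult d X (madj Y)) = (\<Sum>i<d. \<Sum>k<d. X i k * cnj (Y i k))"
  unfolding mtrace_def mmult_def madj_def ..

lemma quadratic_form_madj_mmult:
  "(\<Sum>i<d. cnj (w i) * (\<Sum>j<d. mmult d (madj X) X i j * w j))
     = (\<Sum>k<d. cnj (\<Sum>i<d. X k i * w i) * (\<Sum>j<d. X k j * w j))"
proof -
  have "(\<Sum>i<d. cnj (w i) * (\<Sum>j<d. mmult d (madj X) X i j * w j))
      = (\<Sum>i<d. \<Sum>j<d. \<Sum>k<d. cnj (X k i * w i) * (X k j * w j))"
    by (simp add: mmult_def madj_def sum_distrib_left sum_distrib_right mult_ac)
  also have "\<dots> = (\<Sum>i<d. \<Sum>k<d. \<Sum>j<d. cnj (X k i * w i) * (X k j * w j))"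
    by (intro sum.cong refl sum.swap)
  also have "\<dots> = (\<Sum>k<d. \<Sum>i<d. \<Sum>j<d. cnj (X k i * w i) * (X k j * w j))"
    by (rule sum.swap)
  also have "\<dots> = (\<Sum>k<d. cnj (\<Sum>i<d. X k i * w i) * (\<Sum>j<d. X k j * w j))"
    by (simp add: cnj_sum sum_product)
  finally show ?thesis .
qed

lemma mmult_right_inverse_exists:
  assumes X: "msupp d X"
    and inj: "\<And>w. (\<And>i. i < d \<Longrightarrow> (\<Sum>j<d. X i j * w j) = 0) \<Longrightarrow> (\<And>k. k < d \<Longrightarrow> w k = 0)"
  obtains Y where "msupp d Y" and "mmult d X Y = mone d"
proof -
  define Xm where "Xm = mat d d (\<lambda>(i, j). X i j)"
  have Xm: "Xm \<in> carrier_mat d d" by (simp add: Xm_def)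
  have "det Xm \<noteq> 0"
  proof
    assume "det Xm = 0"
    then obtain v where v: "v \<in> carrier_vec d" "v \<noteq> 0\<^sub>v d" "Xm *\<^sub>v v = 0\<^sub>v d"
      using det_0_iff_vec_prod_zero[OF Xm] by blast
    have "(\<Sum>j<d. X i j * v $ j) = 0" if "i < d" for i
      using that v(1) arg_cong[OF v(3), of "\<lambda>u. u $ i"]
      by (simp add: Xm_def scalar_prod_def atLeast0LessThan)
    then have "v $ k = 0" if "k < d" for k using inj[of "\<lambda>j. v $ j"] that by blast
    then have "v = 0\<^sub>v d" using v(1) by (intro eq_vecI) auto
    with v(2) show False by simp
  qed
  then obtain B where B: "B \<in> carrier_mat d d" "Xm * B = 1\<^sub>m d"
    using det_non_zero_imp_unit[OF Xm, of undefined] unfolding Units_def ring_mat_simps by auto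
  define Y where "Y = (\<lambda>i j. if i < d \<and> j < d then B $$ (i, j) else 0)"
  have "mmult d X Y i j = mone d i j" for i j
  proof (cases "i < d \<and> j < d")
    case True
    then have "mmult d X Y i j = (Xm * B) $$ (i, j)"
      using B(1) by (auto simp: mmult_def Y_def Xm_def scalar_prod_def atLeast0LessThan intro!: sum.cong)
    with True B(2) show ?thesis by (simp add: mone_def)
  next
    case False
    then show ?thesis using X by (auto simp: mmult_def Y_def mone_def msupp_def)
  qed
  moreover have "msupp d Y" by (simp add: msupp_def Y_def)
  ultimately show ?thesis using that by blast
qed

section \<open>Permutation groups and immanants\<close>

definition prod_kernel :: "nat \<Rightarrow> (nat \<Rightarrow> nat \<Rightarrow> real) \<Rightarrow> (nat \<Rightarrow> nat) \<Rightarrow> (nat \<Rightarrow> nat) \<Rightarrow> complex" where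
  "prod_kernel N Y s t = (\<Prod>i\<in>{1..N}. complex_of_real (Y (s i) (t i)))"

definition third_difference ::
    "(('i \<Rightarrow> 'i \<Rightarrow> real) \<Rightarrow> 'a::ab_group_add) \<Rightarrow> ('i \<Rightarrow> 'i \<Rightarrow> real) \<Rightarrow> ('i \<Rightarrow> 'i \<Rightarrow> real)
      \<Rightarrow> ('i \<Rightarrow> 'i \<Rightarrow> real) \<Rightarrow> ('i \<Rightarrow> 'i \<Rightarrow> real) \<Rightarrow> 'a" where
  "third_difference f A B C X =
     f (\<lambda>i j. A i j + X i j) + f (\<lambda>i j. B i j + X i j) + f (\<lambda>i j. C i j + X i j)
   + f (\<lambda>i j. A i j + B i j + C i j + X i j)
   - f (\<lambda>i j. A i j + B i j + X i j) - f (\<lambda>i j. B i j + C i j + X i j)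
   - f (\<lambda>i j. C i j + A i j + X i j) - f X"

locale perm_group =
  fixes G :: "(nat \<Rightarrow> nat) set" and N :: nat
  assumes subgroup: "subgroup G (sym_group N)"
begin

abbreviation inv_perm :: "(nat \<Rightarrow> nat) \<Rightarrow> (nat \<Rightarrow> nat)" where
  "inv_perm s \<equiv> inv\<^bsub>sym_group N\<^esub> s"

lemma mem_permutes: "s \<in> G \<Longrightarrow> s permutes {1..N}"
  using subgroup.subset[OF subgroup] by (auto simp: sym_group_carrier)

lemma finite_G: "finite G"
proof -
  have "G \<subseteq> {p. p permutes {1..N}}" using mem_permutes by blast
  then show ?thesis using finite_permutations[of "{1..N}"] finite_subset by blast
qed

lemma id_in_G: "id \<in> G"
  using subgroup.one_closed[OF subgroup] by (simp add: sym_group_one)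

lemma comp_in_G: "s \<in> G \<Longrightarrow> t \<in> G \<Longrightarrow> s \<circ> t \<in> G"
  using subgroup.m_closed[OF subgroup] by (simp add: sym_group_mult)

lemma inv_in_G: "s \<in> G \<Longrightarrow> inv_perm s \<in> G"
  using subgroup.m_inv_closed[OF subgroup] by simp

lemma comp_inv: "s \<in> G \<Longrightarrow> s \<circ> inv_perm s = id"
  using group.r_inv[OF sym_group_is_group, of s N] subgroup.subset[OF subgroup]
  by (auto simp: sym_group_mult sym_group_one)

lemma inv_comp: "s \<in> G \<Longrightarrow> inv_perm s \<circ> s = id"
  using group.l_inv[OF sym_group_is_group, of s N] subgroup.subset[OF subgroup]
  by (auto simp: sym_group_mult sym_group_one)

lemma bij_betw_comp_right: "s \<in> G \<Longrightarrow> bij_betw (\<lambda>g. g \<circ> s) G G"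
  by (rule bij_betwI[where g = "\<lambda>g. g \<circ> inv_perm s"])
    (auto simp: comp_in_G inv_in_G comp_assoc comp_inv inv_comp)

lemma sum_comp_right: "s \<in> G \<Longrightarrow> (\<Sum>g\<in>G. f (g \<circ> s)) = (\<Sum>g\<in>G. f g)"
  using sum.reindex_bij_betw[OF bij_betw_comp_right] by blast

lemma sum_comp_inv_prod_kernel_eq_immanant:
  "(\<Sum>s\<in>G. \<Sum>t\<in>G. \<chi> (t \<circ> inv_perm s) * prod_kernel N Y s t) = of_nat (card G) * immanant G \<chi> N Y"
proof -
  have "(\<Sum>t\<in>G. \<chi> (t \<circ> inv_perm s) * (\<Prod>i\<in>{1..N}. complex_of_real (Y (s i) (t i))))
      = immanant G \<chi> N Y" if s: "s \<in> G" for s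
  proof -
    have "(\<Prod>i\<in>{1..N}. complex_of_real (Y (s i) (t i)))
        = (\<Prod>i\<in>{1..N}. complex_of_real (Y i ((t \<circ> inv_perm s) i)))" for t
    proof -
      have "inv_perm s (s i) = i" for i using inv_comp[OF s] by (metis comp_apply id_apply)
      then show ?thesis
        using prod.reindex_bij_betw[OF permutes_imp_bij[OF mem_permutes[OF s]],
            of "\<lambda>i. complex_of_real (Y i ((t \<circ> inv_perm s) i))"]
        by simp
    qed
    then show ?thesis
      unfolding immanant_def
      using sum_comp_right[OF inv_in_G[OF s], of "\<lambda>p. \<chi> p * (\<Prod>i\<in>{1..N}. complex_of_real (Y i (p i)))"]
      by simp
  qed
  then show ?thesis by (simp add: prod_kernel_def)
qed

lemma gram_kernel_entry:
  assumes "real_sym_psd N Y" and "i \<in> {1..N}"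
  shows "gram_kernel G (\<lambda>s t. complex_of_real (Y (s i) (t i)))"
proof (rule gram_kernel_comp[where f = "\<lambda>s. s i"])
  show "gram_kernel {1..N} (\<lambda>j k. complex_of_real (Y j k))"
    using assms(1) unfolding real_sym_psd_def by (intro gram_kernel_of_real_psd) (auto simp: quad_form_def)
  show "(\<lambda>s. s i) ` G \<subseteq> {1..N}"
  proof (rule image_subsetI)
    fix s assume "s \<in> G"
    with assms(2) show "s i \<in> {1..N}" by (simp only: permutes_in_image[OF mem_permutes])
  qed
qed

lemma gram_kernel_third_difference_prod_kernel:
  assumes "real_sym_psd N A" "real_sym_psd N B" "real_sym_psd N C" "real_sym_psd N X"
  shows "gram_kernel G (\<lambda>s t. third_difference (\<lambda>Y. prod_kernel N Y s t) A B C X)"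
  by (rule gram_kernel_cong[OF gram_kernel_third_difference_prod[of "{1..N}" G
        "\<lambda>i s t. complex_of_real (A (s i) (t i))" "\<lambda>i s t. complex_of_real (B (s i) (t i))"
        "\<lambda>i s t. complex_of_real (C (s i) (t i))" "\<lambda>i s t. complex_of_real (X (s i) (t i))"]])
    (simp_all add: gram_kernel_entry assms third_difference_def prod_kernel_def)

end

section \<open>Characters are positive definite\<close>

locale perm_rep = perm_group +
  fixes d :: nat and \<rho> :: "(nat \<Rightarrow> nat) \<Rightarrow> complex mat"
  assumes rep: "is_representation G d \<rho>"
begin

definition R :: "(nat \<Rightarrow> nat) \<Rightarrow> cmat" where
  "R s = (\<lambda>i j. if i < d \<and> j < d then \<rho> s $$ (i, j) else 0)"

definition H :: cmat where
  "H = (\<lambda>i j. \<Sum>g\<in>G. mmult d (madj (R g)) (R g) i j)"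

lemma msupp_R: "msupp d (R s)"
  unfolding msupp_def R_def by auto

lemma R_comp: assumes "s \<in> G" "t \<in> G" shows "R (s \<circ> t) = mmult d (R s) (R t)"
proof (intro ext)
  fix i j
  have "\<rho> s \<in> carrier_mat d d" "\<rho> t \<in> carrier_mat d d" "\<rho> (s \<circ> t) = \<rho> s * \<rho> t"
    using rep assms unfolding is_representation_def by auto
  then show "R (s \<circ> t) i j = mmult d (R s) (R t) i j"
    by (auto simp: R_def mmult_def scalar_prod_def atLeast0LessThan intro!: sum.cong)
qed

lemma R_id: "R id = mone d"
  using rep unfolding is_representation_def R_def mone_def by (intro ext) auto

lemma mat_trace_eq_mtrace_R: "s \<in> G \<Longrightarrow> mat_trace (\<rho> s) = mtrace d (R s)"
  using rep unfolding is_representation_def mat_trace_def mtrace_def R_def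
  by (auto intro!: sum.cong)

lemma msupp_H: "msupp d H"
  using msupp_mmult[OF msupp_madj[OF msupp_R] msupp_R] unfolding msupp_def H_def by simp

lemma madj_H: "madj H = H"
  unfolding H_def madj_sum madj_mmult madj_madj ..

lemma H_invariant: assumes s: "s \<in> G" shows "mmult d (madj (R s)) (mmult d H (R s)) = H"
proof -
  have "mmult d (madj (R s)) (mmult d (mmult d (madj (R g)) (R g)) (R s))
      = mmult d (madj (R (g \<circ> s))) (R (g \<circ> s))" if "g \<in> G" for g
    unfolding R_comp[OF that s] madj_mmult by (simp add: mmult_assoc)
  then show ?thesis
    unfolding H_def mmult_sum_left mmult_sum_right
    using sum_comp_right[OF s, of "\<lambda>g. mmult d (madj (R g)) (R g) _ _"]
    by (auto intro!: ext)
qed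

lemma H_definite:
  assumes "\<And>i. i < d \<Longrightarrow> (\<Sum>j<d. H i j * w j) = 0" and "k < d"
  shows "w k = 0"
proof -
  define q where "q g k = cnj (\<Sum>i<d. R g k i * w i) * (\<Sum>j<d. R g k j * w j)" for g k
  have q_nonneg: "0 \<le> q g k" for g k
    unfolding q_def by (simp add: less_eq_complex_def del: cnj_sum)
  have "(\<Sum>g\<in>G. \<Sum>k<d. q g k) = (\<Sum>i<d. cnj (w i) * (\<Sum>j<d. H i j * w j))"
    unfolding q_def H_def quadratic_form_madj_mmult[symmetric]
    by (simp add: sum_distrib_left sum_distrib_right sum.swap[of _ G] mult_ac)
  also have "\<dots> = 0" using assms(1) by simp
  finally have "(\<Sum>k<d. q id k) = 0"
    using sum_nonneg_eq_0_iff[OF finite_G, of "\<lambda>g. \<Sum>k<d. q g k"] id_in_G q_nonneg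
    by (simp add: sum_nonneg)
  then have "q id k = 0" using assms(2) q_nonneg by (simp add: sum_nonneg_eq_0_iff)
  moreover have "(\<Sum>j<d. R id k j * w j) = (\<Sum>j<d. if j = k then w j else 0)"
    by (intro sum.cong) (auto simp: R_id mone_def)
  ultimately show ?thesis using assms(2) unfolding q_def by simp
qed

lemma H_inverse:
  obtains Hi where "msupp d Hi" "madj Hi = Hi" "mmult d Hi H = mone d"
proof -
  obtain Y where Y: "msupp d Y" "mmult d H Y = mone d"
    using mmult_right_inverse_exists[OF msupp_H] H_definite by blast
  have left: "mmult d (madj Y) H = mone d"
    using arg_cong[OF Y(2), of madj] by (simp add: madj_mmult madj_H)
  have "madj Y = mmult d (madj Y) (mmult d H Y)"
    using Y(2) mmult_mone_right[OF msupp_madj[OF Y(1)]] by simp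
  also have "\<dots> = Y"
    using left mmult_mone_left[OF Y(1)] by (simp flip: mmult_assoc)
  finally show ?thesis using that Y(1) left by simp
qed

lemma R_inv_perm:
  assumes Hi: "mmult d Hi H = mone d" and s: "s \<in> G"
  shows "R (inv_perm s) = mmult d Hi (mmult d (madj (R s)) H)"
proof -
  have "mmult d (madj (R s)) H = mmult d (madj (R s)) (mmult d H (mmult d (R s) (R (inv_perm s))))"
    using mmult_mone_right[OF msupp_H] by (simp add: R_comp[symmetric] s inv_in_G comp_inv R_id)
  also have "\<dots> = mmult d H (R (inv_perm s))"
    using H_invariant[OF s] by (simp flip: mmult_assoc)
  finally have "mmult d Hi (mmult d (madj (R s)) H) = mmult d (mmult d Hi H) (R (inv_perm s))"
    by (simp add: mmult_assoc)
  then show ?thesis using Hi mmult_mone_left[OF msupp_R] by simp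
qed

definition R_twist :: "cmat \<Rightarrow> (nat \<Rightarrow> nat) \<Rightarrow> (nat \<Rightarrow> nat) \<Rightarrow> (nat \<Rightarrow> nat) \<Rightarrow> cmat" where
  "R_twist Hi g h x = mmult d (mmult d (mmult d (R g) (R x)) Hi) (madj (R h))"

text \<open>Unitarian trick: R (t \<circ> inv s) = R t Hi madj (R s) H and Hi = Hi H Hi. Expanding both
  copies of H as sums of madj (R g) R g and cycling the trace turns each term into
  mtrace (Z t madj (Z s)) with Z = R_twist Hi g h.\<close>

lemma mtrace_R_comp_inv_perm:
  assumes Hi: "msupp d Hi" "madj Hi = Hi" "mmult d Hi H = mone d" and s: "s \<in> G" and t: "t \<in> G"
  shows "mtrace d (R (t \<circ> inv_perm s))
    = (\<Sum>g\<in>G. \<Sum>h\<in>G. mtrace d (mmult d (R_twist Hi g h t) (madj (R_twist Hi g h s))))"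
proof -
  have Hi_H_Hi: "mmult d Hi (mmult d H (mmult d Hi X)) = mmult d Hi X" for X
    using Hi(3) mmult_mone_left[OF Hi(1)] by (simp flip: mmult_assoc)
  define A where "A = mmult d (R t) (mmult d Hi (mmult d H (mmult d Hi (madj (R s)))))"
  have "R (t \<circ> inv_perm s) = mmult d A H"
    by (simp add: R_comp t inv_in_G[OF s] R_inv_perm[OF Hi(3) s] A_def mmult_assoc Hi_H_Hi)
  then have "mtrace d (R (t \<circ> inv_perm s)) = (\<Sum>g\<in>G. mtrace d (mmult d (mmult d A (madj (R g))) (R g)))"
    unfolding H_def mmult_sum_right by (simp add: mtrace_sum mmult_assoc)
  also have "\<dots> = (\<Sum>g\<in>G. mtrace d (mmult d (R g) (mmult d A (madj (R g)))))"
    by (intro sum.cong refl mtrace_mmult_commute)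
  also have "\<dots> = (\<Sum>g\<in>G. \<Sum>h\<in>G. mtrace d (mmult d (R_twist Hi g h t) (madj (R_twist Hi g h s))))"
  proof (rule sum.cong[OF refl])
    fix g
    have "mmult d (R g) (mmult d A (madj (R g)))
        = (\<lambda>i j. \<Sum>h\<in>G. mmult d (R_twist Hi g h t) (madj (R_twist Hi g h s)) i j)"
      unfolding A_def H_def mmult_sum_left mmult_sum_right R_twist_def
      by (simp add: madj_mmult Hi(2) mmult_assoc)
    then show "mtrace d (mmult d (R g) (mmult d A (madj (R g))))
        = (\<Sum>h\<in>G. mtrace d (mmult d (R_twist Hi g h t) (madj (R_twist Hi g h s))))"
      by (simp add: mtrace_sum)
  qed
  finally show ?thesis .
qed

lemma gram_kernel_mtrace_R: "gram_kernel G (\<lambda>s t. mtrace d (R (t \<circ> inv_perm s)))"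
proof -
  obtain Hi where Hi: "msupp d Hi" "madj Hi = Hi" "mmult d Hi H = mone d"
    by (rule H_inverse)
  have "gram_kernel G (\<lambda>s t. \<Sum>g\<in>G. \<Sum>h\<in>G. \<Sum>i<d. \<Sum>k<d.
      cnj (R_twist Hi g h s i k) * R_twist Hi g h t i k)"
    by (intro gram_kernel_sum finite_G finite_lessThan gram_kernel_rank_one)
  then show ?thesis
    by (elim gram_kernel_cong) (simp add: mtrace_R_comp_inv_perm[OF Hi] mtrace_mmult_madj mult.commute)
qed

lemma gram_kernel_character: "gram_kernel G (\<lambda>s t. mat_trace (\<rho> (t \<circ> inv_perm s)))"
  using gram_kernel_mtrace_R
  by (elim gram_kernel_cong) (simp add: mat_trace_eq_mtrace_R comp_in_G inv_in_G)

end

lemma complex_nonneg_of_nat_mult_iff: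
  fixes z :: complex
  assumes "n \<noteq> 0"
  shows "0 \<le> of_nat n * z \<longleftrightarrow> 0 \<le> z"
  using assms by (auto simp: less_eq_complex_def zero_le_mult_iff)

theorem theorem5p7:
  fixes N :: nat and G :: "(nat \<Rightarrow> nat) set" and \<chi> :: "(nat \<Rightarrow> nat) \<Rightarrow> complex"
    and A B C X :: "nat \<Rightarrow> nat \<Rightarrow> real"
  assumes "subgroup G (sym_group N)"
    and "irreducible_character G \<chi>"
    and "real_sym_psd N A" and "real_sym_psd N B" and "real_sym_psd N C" and "real_sym_psd N X"
  shows "immanant G \<chi> N (\<lambda>i j. A i j + X i j) + immanant G \<chi> N (\<lambda>i j. B i j + X i j)
         + immanant G \<chi> N (\<lambda>i j. C i j + X i j) + immanant G \<chi> N (\<lambda>i j. A i j + B i j + C i j + X i j)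
       \<ge> immanant G \<chi> N (\<lambda>i j. A i j + B i j + X i j) + immanant G \<chi> N (\<lambda>i j. B i j + C i j + X i j)
         + immanant G \<chi> N (\<lambda>i j. C i j + A i j + X i j) + immanant G \<chi> N X"
proof -
  obtain d \<rho> where irr: "irreducible_representation G d \<rho>" and \<chi>: "\<forall>\<sigma>\<in>G. \<chi> \<sigma> = mat_trace (\<rho> \<sigma>)"
    using assms(2) unfolding irreducible_character_def by blast
  have "is_representation G d \<rho>"
    using irr unfolding irreducible_representation_def by blast
  then interpret perm_rep G N d \<rho>
    using assms(1) by (simp add: perm_rep_def perm_rep_axioms_def perm_group_def)
  let ?D = "\<lambda>s t. third_difference (\<lambda>Y. prod_kernel N Y s t) A B C X"
  have "gram_kernel G (\<lambda>s t. \<chi> (t \<circ> inv_perm s) * ?D s t)"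
    using gram_kernel_mult[OF gram_kernel_character gram_kernel_third_difference_prod_kernel[OF assms(3-6)]]
    by (elim gram_kernel_cong) (simp add: \<chi> comp_in_G inv_in_G)
  then have "0 \<le> (\<Sum>s\<in>G. \<Sum>t\<in>G. \<chi> (t \<circ> inv_perm s) * ?D s t)"
    by (rule gram_kernel_nonneg_sum[OF finite_G])
  also have "\<dots> = of_nat (card G) * third_difference (immanant G \<chi> N) A B C X"
    by (simp add: third_difference_def distrib_left right_diff_distrib sum.distrib sum_subtractf
        sum_comp_inv_prod_kernel_eq_immanant)
  finally have "0 \<le> of_nat (card G) * third_difference (immanant G \<chi> N) A B C X" .
  moreover have "card G \<noteq> 0" using finite_G id_in_G by auto
  ultimately have "0 \<le> third_difference (immanant G \<chi> N) A B C X"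
    by (simp add: complex_nonneg_of_nat_mult_iff)
  then show ?thesis by (simp add: third_difference_def le_diff_eq add_ac)
qed

end
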